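(* Let $d\ge 3$ and $h\ge 1$ be integers, and let $G(d,h)$ be the sandpile group of the $d$-valent tree of depth $h$. Then the rank of $G(d,h)$ (the minimal number of generators of this finite abelian group) is $(d-1)^h$.
   Context: Let $\mathcal{T}(d,h)$ be the ball of radius $h$ about a fixed vertex $0$ (the root) in the infinite $d$-regular tree, i.e. the rooted tree in which the root has $d$ children, every vertex at distance $1,\dots,h-1$ from the root has $d-1$ children, and the vertices at distance $h$ (the leaves) have no children. Let $V$ be its vertex set and $A$ its adjacency matrix. Let $\Delta := dI - A$, let $\delta_i\in\mathbb{Z}^V$ ($i\in V$) be the rows of $\Delta$, and let $\Lambda\subset\mathbb{Z}^V$ be the lattice they span. The sandpile group is $G(d,h) := \mathbb{Z}^V/\Lambda$ (a finite abelian group). *)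

theory Defs
  imports Main
begin

text \<open>Vertices of T(d,h): the root is the empty list; a vertex at distance k is the
list of child indices along the path from the root; the root has d children
(indices < d), every other non-leaf vertex has d-1 children (indices < d-1).\<close>

definition tree_verts :: "nat \<Rightarrow> nat \<Rightarrow> nat list set" where
  "tree_verts d h = {xs. length xs \<le> h \<and>
     (\<forall>k<length xs. xs ! k < (if k = 0 then d else d - 1))}"

definition tree_adj :: "nat list \<Rightarrow> nat list \<Rightarrow> bool" where
  "tree_adj u v \<longleftrightarrow> (\<exists>i. v = u @ [i]) \<or> (\<exists>i. u = v @ [i])"

definition tree_Delta :: "nat \<Rightarrow> nat list \<Rightarrow> nat list \<Rightarrow> int" where
  "tree_Delta d u v = (if u = v then int d else 0) - (if tree_adj u v then 1 else 0)"

definition ZV :: "nat \<Rightarrow> nat \<Rightarrow> (nat list \<Rightarrow> int) set" where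
  "ZV d h = {x. \<forall>j. j \<notin> tree_verts d h \<longrightarrow> x j = 0}"

definition sandpile_lattice :: "nat \<Rightarrow> nat \<Rightarrow> (nat list \<Rightarrow> int) set" where
  "sandpile_lattice d h = {f. \<exists>a :: nat list \<Rightarrow> int. \<forall>j.
     f j = (if j \<in> tree_verts d h then (\<Sum>i\<in>tree_verts d h. a i * tree_Delta d i j) else 0)}"

definition sandpile_rank :: "nat \<Rightarrow> nat \<Rightarrow> nat" where
  "sandpile_rank d h = (LEAST k. \<exists>g :: nat \<Rightarrow> nat list \<Rightarrow> int.
     (\<forall>i<k. g i \<in> ZV d h) \<and>
     (\<forall>x \<in> ZV d h. \<exists>c :: nat \<Rightarrow> int.
        (\<lambda>j. x j - (\<Sum>i<k. c i * g i j)) \<in> sandpile_lattice d h))"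

end

theory Submission
  imports Defs "HOL-Library.FuncSet"
begin

text \<open>Let \<open>\<Gamma>\<close> be the set of vertices at even distance from the leaves that are the root or not
  the last child of their parent; counting level by level, \<open>|\<Gamma>| = (d - 1)\<^sup>h\<close>.

  Upper bound: modulo \<open>\<Lambda>\<close>, the row of \<open>\<Delta>\<close> at \<open>u\<close> expresses any neighbour of \<open>u\<close> through \<open>u\<close> and
  the other neighbours. Hence the unit vectors at \<open>\<Gamma>\<close> generate \<open>G(d,h)\<close>: a vertex at odd distance
  is reached through its first child (induction from the leaves upwards), and a last child at
  even distance through its parent (induction from the root downwards).

  Lower bound: for every \<open>v \<in> \<Gamma>\<close> there is an integer function \<open>F\<^sub>v\<close> with \<open>A F\<^sub>v = 0\<close> and
  \<open>F\<^sub>v(w) = \<delta>\<^sub>v\<^sub>w\<close> for \<open>w \<in> \<Gamma>\<close>. Since \<open>\<Delta> F\<^sub>v = d F\<^sub>v\<close>, pairing with the \<open>F\<^sub>v\<close> maps \<open>G(d,h)\<close>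
  onto \<open>(\<int>/d)\<^sup>\<Gamma>\<close>, which needs \<open>|\<Gamma>|\<close> generators.\<close>

text \<open>Pigeonhole: two of the \<open>m\<^bsup>|S|\<^esup>\<close> vectors with entries in \<open>[0, m)\<close> have the same image under
  \<open>M\<close> modulo \<open>m\<close>; take their difference.\<close>

lemma small_mod_solution_exists:
  fixes M :: "nat \<Rightarrow> 'a \<Rightarrow> int" and m :: int
  assumes S: "finite S" and m: "2 \<le> m" and k: "k < card S"
  obtains \<nu> s where "\<And>i. i < k \<Longrightarrow> m dvd (\<Sum>t\<in>S. M i t * \<nu> t)"
    and "s \<in> S" and "\<nu> s \<noteq> 0" and "\<bar>\<nu> s\<bar> < m"
proof -
  let ?D = "S \<rightarrow>\<^sub>E {0..<m}" and ?E = "{..<k} \<rightarrow>\<^sub>E {0..<m}"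
  define \<Phi> where "\<Phi> \<mu> = (\<lambda>i\<in>{..<k}. (\<Sum>t\<in>S. M i t * \<mu> t) mod m)" for \<mu> :: "'a \<Rightarrow> int"
  have "\<Phi> \<mu> \<in> ?E" for \<mu>
    using m unfolding \<Phi>_def restrict_PiE_iff by simp
  then have "card (\<Phi> ` ?D) \<le> card ?E"
    by (intro card_mono) (auto intro: finite_PiE)
  also have "\<dots> = nat m ^ k"
    by (simp add: card_PiE)
  also have "\<dots> < nat m ^ card S"
    using m k by (intro power_strict_increasing) auto
  also have "\<dots> = card ?D"
    using S by (simp add: card_PiE)
  finally have "\<not> inj_on \<Phi> ?D"
    by (rule pigeonhole)
  then obtain \<mu> \<mu>' where \<mu>: "\<mu> \<in> ?D" "\<mu>' \<in> ?D" "\<mu> \<noteq> \<mu>'" "\<Phi> \<mu> = \<Phi> \<mu>'"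
    unfolding inj_on_def by blast
  then obtain s where s: "s \<in> S" "\<mu> s \<noteq> \<mu>' s"
    using PiE_ext by metis
  show ?thesis
  proof (rule that[of "\<lambda>t. \<mu> t - \<mu>' t" s])
    fix i assume "i < k"
    then have "(\<Sum>t\<in>S. M i t * \<mu> t) mod m = (\<Sum>t\<in>S. M i t * \<mu>' t) mod m"
      using fun_cong[OF \<mu>(4), of i] by (simp add: \<Phi>_def)
    then show "m dvd (\<Sum>t\<in>S. M i t * (\<mu> t - \<mu>' t))"
      by (simp add: mod_eq_dvd_iff right_diff_distrib sum_subtractf)
  next
    have "\<mu> s \<in> {0..<m}" and "\<mu>' s \<in> {0..<m}"
      using s(1) \<mu>(1,2) by (auto dest: PiE_mem)
    then show "\<bar>\<mu> s - \<mu>' s\<bar> < m"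
      by (auto simp: abs_less_iff)
  qed (use s in auto)
qed

lemma card_le_of_mod_identity_factorization:
  fixes M :: "nat \<Rightarrow> 'a \<Rightarrow> int" and C :: "'a \<Rightarrow> nat \<Rightarrow> int" and m :: int
  assumes S: "finite S" and m: "2 \<le> m"
    and CM: "\<And>s t. s \<in> S \<Longrightarrow> t \<in> S \<Longrightarrow> m dvd (\<Sum>i<k. C s i * M i t) - (if s = t then 1 else 0)"
  shows "card S \<le> k"
proof (rule ccontr)
  assume "\<not> card S \<le> k"
  then obtain \<nu> s where M\<nu>: "\<And>i. i < k \<Longrightarrow> m dvd (\<Sum>t\<in>S. M i t * \<nu> t)"
    and s: "s \<in> S" "\<nu> s \<noteq> 0" "\<bar>\<nu> s\<bar> < m"
    using small_mod_solution_exists[OF S m, of k M] by auto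
  have "m dvd (\<Sum>t\<in>S. ((\<Sum>i<k. C s i * M i t) - (if s = t then 1 else 0)) * \<nu> t)"
    using CM s(1) by (intro dvd_sum dvd_mult2) auto
  also have "(\<Sum>t\<in>S. ((\<Sum>i<k. C s i * M i t) - (if s = t then 1 else 0)) * \<nu> t) =
      (\<Sum>i<k. C s i * (\<Sum>t\<in>S. M i t * \<nu> t)) - \<nu> s"
    using S s(1)
    by (simp add: left_diff_distrib sum_subtractf sum_distrib_left sum_distrib_right
        mult.assoc sum.swap[of _ S] if_distrib[of "\<lambda>x. x * _"] cong: if_cong)
  finally have diff: "m dvd (\<Sum>i<k. C s i * (\<Sum>t\<in>S. M i t * \<nu> t)) - \<nu> s" .
  have "m dvd (\<Sum>i<k. C s i * (\<Sum>t\<in>S. M i t * \<nu> t))"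
    by (rule dvd_sum, rule dvd_mult) (simp add: M\<nu>)
  from dvd_diff[OF this diff] have "m dvd \<nu> s"
    by simp
  then show False
    using dvd_imp_le_int[of "\<nu> s" m] m s by linarith
qed

section \<open>The tree\<close>

definition child_count :: "nat \<Rightarrow> nat \<Rightarrow> nat" where
  "child_count d k = (if k = 0 then d else d - 1)"

lemma child_count_ge: "d - 1 \<le> child_count d k"
  by (simp add: child_count_def)

lemma Nil_in_tree_verts [simp]: "[] \<in> tree_verts d h"
  by (simp add: tree_verts_def)

lemma snoc_in_tree_verts_iff:
  "xs @ [i] \<in> tree_verts d h \<longleftrightarrow>
     xs \<in> tree_verts d h \<and> length xs < h \<and> i < child_count d (length xs)"
  by (auto simp: tree_verts_def child_count_def nth_append less_Suc_eq
      dest: spec[of _ "length xs"])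

lemma tree_verts_butlast: "xs \<in> tree_verts d h \<Longrightarrow> butlast xs \<in> tree_verts d h"
  by (cases xs rule: rev_cases) (auto simp: snoc_in_tree_verts_iff)

lemma tree_verts_mono_iff:
  "k \<le> h \<Longrightarrow> v \<in> tree_verts d k \<longleftrightarrow> v \<in> tree_verts d h \<and> length v \<le> k"
  by (auto simp: tree_verts_def)

lemma finite_tree_verts: "finite (tree_verts d h)"
proof (rule finite_subset)
  show "tree_verts d h \<subseteq> {xs. set xs \<subseteq> {..<d} \<and> length xs \<le> h}"
    by (fastforce simp: tree_verts_def in_set_conv_nth split: if_splits)
qed (rule finite_lists_length_le, simp)

definition tree_neighbours :: "nat \<Rightarrow> nat \<Rightarrow> nat list \<Rightarrow> nat list set" where
  "tree_neighbours d h u = {w \<in> tree_verts d h. tree_adj u w}"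

lemma tree_adj_iff: "tree_adj u w \<longleftrightarrow> (\<exists>i. w = u @ [i]) \<or> (u \<noteq> [] \<and> w = butlast u)"
  unfolding tree_adj_def by (metis butlast_snoc snoc_eq_iff_butlast)

lemma sum_tree_neighbours:
  assumes "u \<in> tree_verts d h"
  shows "(\<Sum>w\<in>tree_neighbours d h u. F w) = (if u = [] then 0 else F (butlast u)) +
     (if length u < h then (\<Sum>i<child_count d (length u). F (u @ [i])) else 0)"
proof -
  have "tree_neighbours d h u = (if u = [] then {} else {butlast u}) \<union>
      (\<lambda>i. u @ [i]) ` {i. u @ [i] \<in> tree_verts d h}"
    using assms tree_verts_butlast unfolding tree_neighbours_def tree_adj_iff by auto
  moreover have "{i. u @ [i] \<in> tree_verts d h} =
      (if length u < h then {..<child_count d (length u)} else {})"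
    using assms by (auto simp: snoc_in_tree_verts_iff)
  moreover have "(if u = [] then {} else {butlast u}) \<inter> (\<lambda>i. u @ [i]) ` A = {}" for A
  proof -
    have "butlast u \<notin> (\<lambda>i. u @ [i]) ` A" by (auto dest: arg_cong[where f = length])
    then show ?thesis by auto
  qed
  moreover have "sum F ((\<lambda>i. u @ [i]) ` A) = (\<Sum>i\<in>A. F (u @ [i]))" for A
    by (simp add: sum.reindex inj_on_def)
  ultimately show ?thesis
    by (simp add: sum.union_disjoint)
qed

lemma tree_Delta_sum:
  assumes "u \<in> tree_verts d h"
  shows "(\<Sum>j\<in>tree_verts d h. tree_Delta d u j * F j) =
    int d * F u - (\<Sum>w\<in>tree_neighbours d h u. F w)"
  using assms finite_tree_verts[of d h]
  by (simp add: tree_Delta_def tree_neighbours_def left_diff_distrib sum_subtractf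
      sum.inter_filter if_distrib[of "\<lambda>x. x * F _"] cong: if_cong)

section \<open>The lattice spanned by the rows of \<open>\<Delta>\<close>\<close>

definition unit_vec :: "nat list \<Rightarrow> nat list \<Rightarrow> int" where
  "unit_vec v = (\<lambda>j. if j = v then 1 else 0)"

lemma unit_vec_in_ZV: "v \<in> tree_verts d h \<Longrightarrow> unit_vec v \<in> ZV d h"
  by (simp add: ZV_def unit_vec_def)

lemma sandpile_lattice_zero: "(\<lambda>j. 0) \<in> sandpile_lattice d h"
  unfolding sandpile_lattice_def mem_Collect_eq by (intro exI[of _ "\<lambda>i. 0"]) simp

lemma sandpile_lattice_add:
  assumes "f \<in> sandpile_lattice d h" and "g \<in> sandpile_lattice d h"
  shows "(\<lambda>j. f j + g j) \<in> sandpile_lattice d h"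
proof -
  obtain a b where
    a: "\<forall>j. f j = (if j \<in> tree_verts d h then (\<Sum>i\<in>tree_verts d h. a i * tree_Delta d i j) else 0)" and
    b: "\<forall>j. g j = (if j \<in> tree_verts d h then (\<Sum>i\<in>tree_verts d h. b i * tree_Delta d i j) else 0)"
    using assms unfolding sandpile_lattice_def by blast
  have "\<forall>j. f j + g j =
      (if j \<in> tree_verts d h then (\<Sum>i\<in>tree_verts d h. (a i + b i) * tree_Delta d i j) else 0)"
    using a b by (simp add: distrib_right sum.distrib)
  then show ?thesis
    unfolding sandpile_lattice_def mem_Collect_eq by (rule exI[of _ "\<lambda>i. a i + b i"])
qed

lemma sandpile_lattice_smult:
  assumes "f \<in> sandpile_lattice d h"
  shows "(\<lambda>j. c * f j) \<in> sandpile_lattice d h"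
proof -
  obtain a where
    a: "\<forall>j. f j = (if j \<in> tree_verts d h then (\<Sum>i\<in>tree_verts d h. a i * tree_Delta d i j) else 0)"
    using assms unfolding sandpile_lattice_def by blast
  have "\<forall>j. c * f j =
      (if j \<in> tree_verts d h then (\<Sum>i\<in>tree_verts d h. (c * a i) * tree_Delta d i j) else 0)"
    using a by (simp add: sum_distrib_left mult.assoc)
  then show ?thesis
    unfolding sandpile_lattice_def mem_Collect_eq by (rule exI[of _ "\<lambda>i. c * a i"])
qed

lemma tree_row_in_sandpile_lattice:
  assumes u: "u \<in> tree_verts d h"
  shows "(\<lambda>j. int d * unit_vec u j - (\<Sum>w\<in>tree_neighbours d h u. unit_vec w j))
    \<in> sandpile_lattice d h"
proof -
  have "int d * unit_vec u j - (\<Sum>w\<in>tree_neighbours d h u. unit_vec w j) =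
      (if j \<in> tree_verts d h then tree_Delta d u j else 0)" for j
    using u finite_tree_verts[of d h]
    by (auto simp: unit_vec_def tree_Delta_def tree_neighbours_def tree_adj_def)
  moreover have "(\<Sum>i\<in>tree_verts d h. unit_vec u i * tree_Delta d i j) = tree_Delta d u j" for j
    using u finite_tree_verts[of d h] by (simp add: unit_vec_def if_distrib[of "\<lambda>x. x * _"] cong: if_cong)
  ultimately show ?thesis
    unfolding sandpile_lattice_def mem_Collect_eq by (intro exI[of _ "unit_vec u"]) simp
qed

lemma sandpile_lattice_orthogonal:
  assumes f: "f \<in> sandpile_lattice d h"
    and harmonic: "\<And>u. u \<in> tree_verts d h \<Longrightarrow> (\<Sum>w\<in>tree_neighbours d h u. F w) = 0"
  shows "int d dvd (\<Sum>j\<in>tree_verts d h. f j * F j)"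
proof -
  obtain a where a:
    "\<forall>j. f j = (if j \<in> tree_verts d h then (\<Sum>i\<in>tree_verts d h. a i * tree_Delta d i j) else 0)"
    using f unfolding sandpile_lattice_def by blast
  have "(\<Sum>j\<in>tree_verts d h. f j * F j) =
      (\<Sum>j\<in>tree_verts d h. \<Sum>i\<in>tree_verts d h. a i * (tree_Delta d i j * F j))"
    using a by (simp add: sum_distrib_right mult.assoc)
  also have "\<dots> = (\<Sum>i\<in>tree_verts d h. a i * (\<Sum>j\<in>tree_verts d h. tree_Delta d i j * F j))"
    by (subst sum.swap) (simp add: sum_distrib_left)
  also have "\<dots> = (\<Sum>i\<in>tree_verts d h. a i * (int d * F i))"
    by (intro sum.cong refl) (simp add: tree_Delta_sum harmonic)
  also have "\<dots> = int d * (\<Sum>i\<in>tree_verts d h. a i * F i)"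
    by (simp add: sum_distrib_left algebra_simps)
  finally show ?thesis by simp
qed

text \<open>The preimage in \<open>\<int>\<^sup>V\<close> of the subgroup of \<open>G(d,h)\<close> generated by the classes of
  \<open>g 0, \<dots>, g (k - 1)\<close>.\<close>

definition span_mod :: "nat \<Rightarrow> nat \<Rightarrow> nat \<Rightarrow> (nat \<Rightarrow> nat list \<Rightarrow> int) \<Rightarrow> (nat list \<Rightarrow> int) set"
  where "span_mod d h k g = {y. \<exists>c. (\<lambda>j. y j - (\<Sum>i<k. c i * g i j)) \<in> sandpile_lattice d h}"

lemma span_modI: "(\<lambda>j. y j - (\<Sum>i<k. c i * g i j)) \<in> sandpile_lattice d h \<Longrightarrow> y \<in> span_mod d h k g"
  unfolding span_mod_def by blast

lemma sandpile_lattice_subset_span_mod: "sandpile_lattice d h \<subseteq> span_mod d h k g"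
  using span_modI[where c="\<lambda>i. 0"] by auto

lemma span_mod_add:
  assumes "y \<in> span_mod d h k g" and "z \<in> span_mod d h k g"
  shows "(\<lambda>j. y j + z j) \<in> span_mod d h k g"
proof -
  obtain b c where
    b: "(\<lambda>j. y j - (\<Sum>i<k. b i * g i j)) \<in> sandpile_lattice d h" and
    c: "(\<lambda>j. z j - (\<Sum>i<k. c i * g i j)) \<in> sandpile_lattice d h"
    using assms unfolding span_mod_def by blast
  have "(\<lambda>j. (y j + z j) - (\<Sum>i<k. (b i + c i) * g i j)) =
      (\<lambda>j. (y j - (\<Sum>i<k. b i * g i j)) + (z j - (\<Sum>i<k. c i * g i j)))"
    by (simp add: fun_eq_iff distrib_right sum.distrib)
  then have "(\<lambda>j. (y j + z j) - (\<Sum>i<k. (b i + c i) * g i j)) \<in> sandpile_lattice d h"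
    using sandpile_lattice_add[OF b c] by (simp only:)
  then show ?thesis by (rule span_modI)
qed

lemma span_mod_smult:
  assumes "y \<in> span_mod d h k g"
  shows "(\<lambda>j. a * y j) \<in> span_mod d h k g"
proof -
  obtain c where c: "(\<lambda>j. y j - (\<Sum>i<k. c i * g i j)) \<in> sandpile_lattice d h"
    using assms unfolding span_mod_def by blast
  have "(\<lambda>j. a * y j - (\<Sum>i<k. (a * c i) * g i j)) = (\<lambda>j. a * (y j - (\<Sum>i<k. c i * g i j)))"
    by (simp add: fun_eq_iff right_diff_distrib sum_distrib_left mult.assoc)
  then have "(\<lambda>j. a * y j - (\<Sum>i<k. (a * c i) * g i j)) \<in> sandpile_lattice d h"
    using sandpile_lattice_smult[OF c] by (simp only:)
  then show ?thesis by (rule span_modI)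
qed

lemma span_mod_diff:
  assumes "y \<in> span_mod d h k g" and "z \<in> span_mod d h k g"
  shows "(\<lambda>j. y j - z j) \<in> span_mod d h k g"
  using span_mod_add[OF assms(1) span_mod_smult[OF assms(2), of "-1"]] by simp

lemma span_mod_sum:
  assumes "\<And>s. s \<in> A \<Longrightarrow> f s \<in> span_mod d h k g"
  shows "(\<lambda>j. \<Sum>s\<in>A. f s j) \<in> span_mod d h k g"
  using assms
proof (induction A rule: infinite_finite_induct)
  case (insert s A)
  then show ?case using span_mod_add[of "f s" d h k g] by simp
qed (use subsetD[OF sandpile_lattice_subset_span_mod sandpile_lattice_zero] in simp_all)

lemma generator_in_span_mod:
  assumes "i < k"
  shows "g i \<in> span_mod d h k g"
proof (rule span_modI[where c="\<lambda>i'. if i' = i then 1 else 0"])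
  show "(\<lambda>j. g i j - (\<Sum>i'<k. (if i' = i then 1 else 0) * g i' j)) \<in> sandpile_lattice d h"
    using assms sandpile_lattice_zero by (simp add: if_distrib[of "\<lambda>x. x * _"] cong: if_cong)
qed

text \<open>The row of \<open>\<Delta>\<close> at \<open>u\<close> says that modulo \<open>\<Lambda>\<close> each neighbour \<open>p\<close> of \<open>u\<close> is
  \<open>d e\<^sub>u\<close> minus the other neighbours.\<close>

lemma unit_vec_neighbour_in_span_mod:
  assumes u: "u \<in> tree_verts d h" and p: "p \<in> tree_neighbours d h u"
    and "unit_vec u \<in> span_mod d h k g"
    and "\<And>w. w \<in> tree_neighbours d h u \<Longrightarrow> w \<noteq> p \<Longrightarrow> unit_vec w \<in> span_mod d h k g"
  shows "unit_vec p \<in> span_mod d h k g"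
proof -
  have fin: "finite (tree_neighbours d h u)"
    using finite_tree_verts by (simp add: tree_neighbours_def)
  have "unit_vec p = (\<lambda>j. int d * unit_vec u j
      - (\<Sum>w\<in>tree_neighbours d h u - {p}. unit_vec w j)
      - (int d * unit_vec u j - (\<Sum>w\<in>tree_neighbours d h u. unit_vec w j)))"
    by (rule ext) (simp add: sum.remove[OF fin p])
  also have "\<dots> \<in> span_mod d h k g"
  proof (rule span_mod_diff)
    show "(\<lambda>j. int d * unit_vec u j - (\<Sum>w\<in>tree_neighbours d h u - {p}. unit_vec w j))
        \<in> span_mod d h k g"
      using assms by (intro span_mod_diff span_mod_smult span_mod_sum) auto
    show "(\<lambda>j. int d * unit_vec u j - (\<Sum>w\<in>tree_neighbours d h u. unit_vec w j))
        \<in> span_mod d h k g"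
      using tree_row_in_sandpile_lattice[OF u] sandpile_lattice_subset_span_mod by blast
  qed
  finally show ?thesis .
qed

section \<open>The generating set and its size\<close>

definition generator_verts :: "nat \<Rightarrow> nat \<Rightarrow> nat list set" where
  "generator_verts d h = {v \<in> tree_verts d h. even (h - length v) \<and>
     (v = [] \<or> Suc (last v) < child_count d (length v - 1))}"

lemma finite_generator_verts: "finite (generator_verts d h)"
  using finite_tree_verts[of d h] by (simp add: generator_verts_def)

lemma snoc_in_generator_verts_iff:
  "u @ [i] \<in> generator_verts d h \<longleftrightarrow>
     u \<in> tree_verts d h \<and> length u < h \<and> odd (h - length u) \<and> Suc i < child_count d (length u)"
proof -
  have "length u < h \<Longrightarrow> h - length u = Suc (h - length (u @ [i]))"
    by simp
  then show ?thesis
    by (auto simp: generator_verts_def snoc_in_tree_verts_iff)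
qed

lemma in_snoc_image_iff:
  "v \<in> (\<lambda>(u, i). u @ [i]) ` (A \<times> {..<b}) \<longleftrightarrow> v \<noteq> [] \<and> butlast v \<in> A \<and> last v < b"
  by (cases v rule: rev_cases) auto

lemma card_snoc_image:
  "finite A \<Longrightarrow> card ((\<lambda>(u, i). u @ [i]) ` (A \<times> {..<b})) = card A * b"
  by (subst card_image) (auto simp: inj_on_def card_cartesian_product)

definition tree_level :: "nat \<Rightarrow> nat \<Rightarrow> nat list set" where
  "tree_level d k = {v \<in> tree_verts d k. length v = k}"

lemma finite_tree_level: "finite (tree_level d k)"
  using finite_tree_verts[of d k] by (simp add: tree_level_def)

lemma tree_level_0: "tree_level d 0 = {[]}"
  by (auto simp: tree_level_def)

lemma tree_level_Suc:
  "tree_level d (Suc k) = (\<lambda>(u, i). u @ [i]) ` (tree_level d k \<times> {..<child_count d k})"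
proof (intro set_eqI)
  fix v
  show "v \<in> tree_level d (Suc k) \<longleftrightarrow> v \<in> (\<lambda>(u, i). u @ [i]) ` (tree_level d k \<times> {..<child_count d k})"
  proof (cases v rule: rev_cases)
    case (snoc u i)
    then show ?thesis
      using tree_verts_mono_iff[of k "Suc k" u d]
      by (auto simp: tree_level_def in_snoc_image_iff snoc_in_tree_verts_iff)
  qed (simp add: tree_level_def in_snoc_image_iff)
qed

lemma card_tree_level_Suc: "card (tree_level d (Suc k)) = d * (d - 1) ^ k"
proof (induction k)
  case 0
  then show ?case
    by (simp add: tree_level_Suc tree_level_0 card_snoc_image child_count_def)
next
  case (Suc k)
  then show ?case
    by (simp add: tree_level_Suc[of d "Suc k"] card_snoc_image finite_tree_level child_count_def)
qed

lemma generator_verts_0: "generator_verts d 0 = {[]}"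
  by (auto simp: generator_verts_def tree_verts_def)

lemma generator_verts_1:
  "generator_verts d (Suc 0) = (\<lambda>(u, i). u @ [i]) ` (tree_level d 0 \<times> {..<d - 1})"
proof (intro set_eqI)
  fix v
  show "v \<in> generator_verts d (Suc 0) \<longleftrightarrow> v \<in> (\<lambda>(u, i). u @ [i]) ` (tree_level d 0 \<times> {..<d - 1})"
  proof (cases v rule: rev_cases)
    case Nil
    then show ?thesis by (simp add: generator_verts_def in_snoc_image_iff)
  next
    case (snoc u i)
    then show ?thesis
      by (simp only: snoc_in_generator_verts_iff in_snoc_image_iff tree_level_0)
        (auto simp: child_count_def)
  qed
qed

lemma generator_verts_Suc_Suc:
  "generator_verts d (Suc (Suc h)) =
     (\<lambda>(u, i). u @ [i]) ` (tree_level d (Suc h) \<times> {..<d - 2}) \<union> generator_verts d h"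
proof (intro set_eqI)
  fix v
  show "v \<in> generator_verts d (Suc (Suc h)) \<longleftrightarrow>
      v \<in> (\<lambda>(u, i). u @ [i]) ` (tree_level d (Suc h) \<times> {..<d - 2}) \<union> generator_verts d h"
  proof (cases v rule: rev_cases)
    case Nil
    then show ?thesis by (simp add: generator_verts_def in_snoc_image_iff)
  next
    case (snoc u i)
    show ?thesis
    proof (cases "length u = Suc h")
      case True
      then show ?thesis
        using snoc tree_verts_mono_iff[of "Suc h" "Suc (Suc h)" u d]
        by (auto simp: snoc_in_generator_verts_iff in_snoc_image_iff tree_level_def child_count_def)
    next
      case False
      have "length u < Suc (Suc h) \<and> odd (Suc (Suc h) - length u) \<longleftrightarrow>
          length u < h \<and> odd (h - length u)"
      proof (cases "length u \<le> h")
        case True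
        then obtain n where "h = length u + n"
          using le_Suc_ex by blast
        then show ?thesis
          by (auto dest: odd_pos)
      qed (use False in auto)
      then show ?thesis
        using snoc False tree_verts_mono_iff[of h "Suc (Suc h)" u d]
        by (auto simp: snoc_in_generator_verts_iff in_snoc_image_iff tree_level_def)
    qed
  qed
qed

lemma card_generator_verts:
  assumes "2 \<le> d"
  shows "card (generator_verts d h) = (d - 1) ^ h"
proof (induction h rule: nat_induct2)
  case 0
  then show ?case by (simp add: generator_verts_0)
next
  case 1
  then show ?case
    by (simp add: generator_verts_1 card_snoc_image tree_level_0)
next
  case (step h)
  have "generator_verts d h \<inter> (\<lambda>(u, i). u @ [i]) ` (tree_level d (Suc h) \<times> {..<d - 2}) = {}"
    by (auto simp: generator_verts_def tree_level_def tree_verts_def)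
  then have "card (generator_verts d (h + 2)) = d * (d - 1) ^ h * (d - 2) + (d - 1) ^ h"
    using step by (simp add: generator_verts_Suc_Suc card_Un_disjoint card_snoc_image finite_tree_level
        finite_generator_verts card_tree_level_Suc Int_commute)
  also have "\<dots> = (d - 1) ^ (h + 2)"
  proof -
    obtain e where "d = e + 2"
      using assms by (metis add.commute le_Suc_ex)
    then show ?thesis
      by (simp add: algebra_simps power2_eq_square power_add)
  qed
  finally show ?case .
qed

section \<open>Upper bound\<close>

lemma unit_vec_odd_in_span_mod:
  assumes d: "3 \<le> d"
    and gen: "\<And>v. v \<in> generator_verts d h \<Longrightarrow> unit_vec v \<in> span_mod d h k g"
    and "p \<in> tree_verts d h" and "odd (h - length p)"
  shows "unit_vec p \<in> span_mod d h k g"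
  using assms(3,4)
proof (induction "h - length p" arbitrary: p rule: less_induct)
  case less
  let ?u = "p @ [0]"
  have "length p < h"
    using odd_pos[OF less.prems(2)] by simp
  moreover have "Suc 0 < child_count d (length p)"
    using d child_count_ge[of d "length p"] by linarith
  ultimately have u_gen: "?u \<in> generator_verts d h"
    using less.prems by (simp add: snoc_in_generator_verts_iff)
  then have u: "?u \<in> tree_verts d h"
    by (simp add: generator_verts_def)
  have p: "p \<in> tree_neighbours d h ?u"
    using less.prems(1) by (auto simp: tree_neighbours_def tree_adj_def)
  show ?case
  proof (rule unit_vec_neighbour_in_span_mod[OF u p gen[OF u_gen]])
    fix w assume "w \<in> tree_neighbours d h ?u" and "w \<noteq> p"
    then obtain i where w: "w = ?u @ [i]" and "w \<in> tree_verts d h"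
      by (auto simp: tree_neighbours_def tree_adj_iff)
    then have "length w \<le> h"
      by (simp add: tree_verts_def)
    show "unit_vec w \<in> span_mod d h k g"
    proof (rule less.hyps)
      show "h - length w < h - length p" and "odd (h - length w)"
        using w \<open>length w \<le> h\<close> less.prems(2) by auto
    qed fact
  qed
qed

lemma last_child_if_not_generator:
  assumes v: "v \<in> tree_verts d h" and "even (h - length v)" and "v \<notin> generator_verts d h"
  obtains u where "v = u @ [child_count d (length u) - 1]" and "u \<in> tree_verts d h"
    and "length u < h" and "odd (h - length u)"
proof -
  have "v \<noteq> []" and not_Suc_last: "\<not> Suc (last v) < child_count d (length v - 1)"
    using assms by (auto simp: generator_verts_def)
  define u where "u = butlast v"
  have v_eq: "v = u @ [last v]" and len_v: "length v = Suc (length u)"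
    using \<open>v \<noteq> []\<close> by (simp_all add: u_def)
  have u: "u \<in> tree_verts d h" and "length u < h" and "last v < child_count d (length u)"
    using v v_eq snoc_in_tree_verts_iff by metis+
  then have "last v = child_count d (length u) - 1"
    using not_Suc_last len_v by simp
  moreover have "h - length u = Suc (h - length v)"
    using \<open>length u < h\<close> len_v by simp
  ultimately show ?thesis
    using that v_eq u \<open>length u < h\<close> \<open>even (h - length v)\<close> by simp
qed

lemma unit_vec_even_in_span_mod:
  assumes d: "3 \<le> d"
    and gen: "\<And>v. v \<in> generator_verts d h \<Longrightarrow> unit_vec v \<in> span_mod d h k g"
    and "v \<in> tree_verts d h" and "even (h - length v)"
  shows "unit_vec v \<in> span_mod d h k g"
  using assms(3,4)
proof (induction "length v" arbitrary: v rule: less_induct)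
  case less
  show ?case
  proof (cases "v \<in> generator_verts d h")
    case True
    then show ?thesis by (rule gen)
  next
    case False
    with less.prems obtain u where v_eq: "v = u @ [child_count d (length u) - 1]"
      and u: "u \<in> tree_verts d h" and "length u < h" and "odd (h - length u)"
      by (rule last_child_if_not_generator)
    have v: "v \<in> tree_neighbours d h u"
      using less.prems(1) v_eq unfolding tree_neighbours_def tree_adj_def by blast
    show ?thesis
    proof (rule unit_vec_neighbour_in_span_mod[OF u v])
      show "unit_vec u \<in> span_mod d h k g"
        by (rule unit_vec_odd_in_span_mod[OF d gen u \<open>odd (h - length u)\<close>])
      fix w assume "w \<in> tree_neighbours d h u" and "w \<noteq> v"
      then consider (child) i where "w = u @ [i]" and "w \<in> tree_verts d h"
        | (parent) "u \<noteq> []" and "w = butlast u"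
        by (auto simp: tree_neighbours_def tree_adj_iff)
      then show "unit_vec w \<in> span_mod d h k g"
      proof cases
        case child
        with \<open>w \<noteq> v\<close> v_eq have "i \<noteq> child_count d (length u) - 1"
          by auto
        moreover have "i < child_count d (length u)"
          using child snoc_in_tree_verts_iff by blast
        ultimately have "Suc i < child_count d (length u)"
          by linarith
        then show ?thesis
          using child u \<open>length u < h\<close> \<open>odd (h - length u)\<close>
          by (intro gen) (simp add: snoc_in_generator_verts_iff)
      next
        case parent
        have "length w = length u - 1" and "0 < length u"
          using parent by simp_all
        then have "h - length w = Suc (h - length u)"
          using \<open>length u < h\<close> by linarith
        show ?thesis
        proof (rule less.hyps)
          show "length w < length v"
            using parent v_eq by simp
          show "w \<in> tree_verts d h"
            using parent u by (simp add: tree_verts_butlast)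
          show "even (h - length w)"
            using \<open>h - length w = Suc (h - length u)\<close> \<open>odd (h - length u)\<close> by simp
        qed
      qed
    qed
  qed
qed

lemma ZV_subset_span_mod:
  assumes d: "3 \<le> d"
    and gen: "\<And>v. v \<in> generator_verts d h \<Longrightarrow> unit_vec v \<in> span_mod d h k g"
  shows "ZV d h \<subseteq> span_mod d h k g"
proof
  fix x assume x: "x \<in> ZV d h"
  have "x = (\<lambda>j. \<Sum>v\<in>tree_verts d h. x v * unit_vec v j)"
    using x finite_tree_verts[of d h]
    by (auto simp: fun_eq_iff unit_vec_def ZV_def if_distrib[of "\<lambda>y. _ * y"] cong: if_cong)
  also have "\<dots> \<in> span_mod d h k g"
  proof (intro span_mod_sum span_mod_smult)
    fix v assume "v \<in> tree_verts d h"
    then show "unit_vec v \<in> span_mod d h k g"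
      using unit_vec_odd_in_span_mod[OF d gen] unit_vec_even_in_span_mod[OF d gen] by blast
  qed
  finally show "x \<in> span_mod d h k g" .
qed

lemma sandpile_generators_exist:
  assumes "3 \<le> d"
  obtains g where "\<forall>i<card (generator_verts d h). g i \<in> ZV d h"
    and "ZV d h \<subseteq> span_mod d h (card (generator_verts d h)) g"
proof -
  let ?n = "card (generator_verts d h)"
  obtain f where f: "bij_betw f {0..<?n} (generator_verts d h)"
    using ex_bij_betw_nat_finite[OF finite_generator_verts] by blast
  let ?g = "\<lambda>i. unit_vec (f i)"
  have "\<forall>i<?n. ?g i \<in> ZV d h"
  proof (intro allI impI)
    fix i assume "i < ?n"
    then have "f i \<in> generator_verts d h"
      using bij_betw_apply[OF f] by simp
    then show "?g i \<in> ZV d h"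
      by (intro unit_vec_in_ZV) (simp add: generator_verts_def)
  qed
  moreover have "ZV d h \<subseteq> span_mod d h ?n ?g"
  proof (rule ZV_subset_span_mod[OF assms])
    fix v assume "v \<in> generator_verts d h"
    then have "v \<in> f ` {0..<?n}"
      using f by (simp add: bij_betw_def)
    then obtain i where "i < ?n" and "v = f i"
      by auto
    then show "unit_vec v \<in> span_mod d h ?n ?g"
      using generator_in_span_mod[of i ?n ?g] by simp
  qed
  ultimately show ?thesis by (rule that)
qed

section \<open>Lower bound\<close>

text \<open>\<open>kernel_vec d h v\<close> lies in the kernel of the adjacency matrix and is dual to the generators:
  it is \<open>\<delta>\<^sub>v\<close> on \<open>generator_verts d h\<close> and vanishes at odd distance from the leaves, and its
  value at the last child \<open>w\<close> of \<open>u\<close> is forced by requiring that the neighbours of \<open>u\<close> sum to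
  zero (the parent of \<open>u\<close> is \<open>butlast (butlast w)\<close>).\<close>

function kernel_vec :: "nat \<Rightarrow> nat \<Rightarrow> nat list \<Rightarrow> nat list \<Rightarrow> int" where
  "kernel_vec d h v w =
    (if odd (h - length w) then 0
     else if w = [] \<or> Suc (last w) < child_count d (length w - 1) then (if w = v then 1 else 0)
     else - kernel_vec d h v (butlast (butlast w)) - (if v \<noteq> [] \<and> butlast v = butlast w then 1 else 0))"
  by pat_completeness auto
termination by (relation "measure (\<lambda>(d, h, v, w). length w)") auto

declare kernel_vec.simps [simp del]

lemma kernel_vec_odd: "odd (h - length w) \<Longrightarrow> kernel_vec d h v w = 0"
  by (simp add: kernel_vec.simps)

lemma kernel_vec_generator:
  "w \<in> generator_verts d h \<Longrightarrow> kernel_vec d h v w = (if w = v then 1 else 0)"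
  by (subst kernel_vec.simps) (auto simp: generator_verts_def)

lemma sum_children_indicator:
  assumes "v \<in> generator_verts d h"
  shows "(\<Sum>i<child_count d (length u) - 1. if u @ [i] = v then 1 else 0 :: int) =
    (if v \<noteq> [] \<and> butlast v = u then 1 else 0)"
proof (cases "v \<noteq> [] \<and> butlast v = u")
  case True
  then have "v = u @ [last v]"
    by (metis append_butlast_last_id)
  moreover have "last v < child_count d (length u) - 1"
    using assms True by (auto simp: generator_verts_def)
  ultimately show ?thesis
    using True by (simp add: snoc_eq_iff_butlast)
next
  case False
  then have "u @ [i] \<noteq> v" for i by auto
  then show ?thesis using False by simp
qed

lemma kernel_vec_harmonic:
  assumes d: "2 \<le> d" and v: "v \<in> generator_verts d h" and u: "u \<in> tree_verts d h"
  shows "(\<Sum>w\<in>tree_neighbours d h u. kernel_vec d h v w) = 0"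
proof (cases "even (h - length u)")
  case True
  have "length u \<le> h"
    using u by (simp add: tree_verts_def)
  with True have "u \<noteq> [] \<Longrightarrow> odd (h - length (butlast u))"
    by (cases "length u") auto
  moreover have "length u < h \<Longrightarrow> odd (h - length (u @ [i]))" for i
    using True by simp
  ultimately show ?thesis
    by (simp add: sum_tree_neighbours[OF u] kernel_vec_odd)
next
  case False
  then have "length u < h"
    using odd_pos by fastforce
  let ?m = "child_count d (length u)"
  let ?sib = "if v \<noteq> [] \<and> butlast v = u then 1 else 0 :: int"
  have m: "?m = Suc (?m - 1)"
    using d child_count_ge[of d "length u"] by linarith
  have even_child: "\<not> odd (h - length (u @ [i]))" for i
    using False \<open>length u < h\<close> by simp
  have "kernel_vec d h v (u @ [i]) = (if u @ [i] = v then 1 else 0)" if "i < ?m - 1" for i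
  proof -
    have "Suc i < ?m"
      using that by linarith
    then show ?thesis
      using even_child[of i] by (subst kernel_vec.simps) simp
  qed
  then have "(\<Sum>i<?m - 1. kernel_vec d h v (u @ [i])) = ?sib"
    using sum_children_indicator[OF v] by simp
  moreover have "kernel_vec d h v (u @ [?m - 1]) = - kernel_vec d h v (butlast u) - ?sib"
    using even_child[of "?m - 1"] m by (subst kernel_vec.simps) simp
  ultimately have "(\<Sum>i<?m. kernel_vec d h v (u @ [i])) = - kernel_vec d h v (butlast u)"
    by (subst m) (simp del: Suc_pred)
  moreover have "u = [] \<Longrightarrow> kernel_vec d h v (butlast u) = 0"
    using False by (simp add: kernel_vec_odd)
  ultimately show ?thesis
    using \<open>length u < h\<close> by (simp add: sum_tree_neighbours[OF u])
qed

lemma card_generator_verts_le: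
  assumes d: "2 \<le> d" and spans: "ZV d h \<subseteq> span_mod d h k g"
  shows "card (generator_verts d h) \<le> k"
proof -
  let ?V = "tree_verts d h" and ?G = "generator_verts d h"
  have "\<exists>c. (\<lambda>j. unit_vec s j - (\<Sum>i<k. c i * g i j)) \<in> sandpile_lattice d h"
    if "s \<in> ?G" for s
  proof -
    have "unit_vec s \<in> ZV d h"
      using that unit_vec_in_ZV unfolding generator_verts_def by blast
    with spans show ?thesis
      unfolding span_mod_def by blast
  qed
  then obtain c where c: "\<And>s. s \<in> ?G \<Longrightarrow>
      (\<lambda>j. unit_vec s j - (\<Sum>i<k. c s i * g i j)) \<in> sandpile_lattice d h"
    by metis
  show ?thesis
  proof (rule card_le_of_mod_identity_factorization[OF finite_generator_verts, where m = "int d"])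
    show "2 \<le> int d" using d by simp
    fix s t assume s: "s \<in> ?G" and t: "t \<in> ?G"
    let ?x = "\<lambda>j. unit_vec s j - (\<Sum>i<k. c s i * g i j)"
    have "int d dvd (\<Sum>j\<in>?V. ?x j * kernel_vec d h t j)"
      by (rule sandpile_lattice_orthogonal[OF c[OF s] kernel_vec_harmonic[OF d t]])
    moreover have "(\<Sum>j\<in>?V. ?x j * kernel_vec d h t j) =
        kernel_vec d h t s - (\<Sum>i<k. c s i * (\<Sum>j\<in>?V. g i j * kernel_vec d h t j))"
      using s finite_tree_verts[of d h]
      by (simp add: generator_verts_def unit_vec_def left_diff_distrib sum_subtractf
          sum_distrib_left sum_distrib_right mult.assoc sum.swap[of _ "{..<k}"]
          if_distrib[of "\<lambda>x. x * _"] cong: if_cong)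
    moreover have "kernel_vec d h t s = (if s = t then 1 else 0)"
      using kernel_vec_generator[OF s] .
    ultimately show "int d dvd (\<Sum>i<k. c s i * (\<Sum>j\<in>?V. g i j * kernel_vec d h t j)) -
        (if s = t then 1 else 0)"
      by (simp only: dvd_diff_commute)
  qed
qed

lemma sandpile_rank_eq_Least:
  "sandpile_rank d h = (LEAST k. \<exists>g. (\<forall>i<k. g i \<in> ZV d h) \<and> ZV d h \<subseteq> span_mod d h k g)"
  unfolding sandpile_rank_def span_mod_def by (simp add: subset_eq)

theorem theorem2p1:
  fixes d h :: nat
  assumes "d \<ge> 3" and "h \<ge> 1"
  shows "sandpile_rank d h = (d - 1) ^ h"
proof -
  have "sandpile_rank d h = card (generator_verts d h)"
    unfolding sandpile_rank_eq_Least
  proof (rule Least_equality)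
    show "\<exists>g. (\<forall>i<card (generator_verts d h). g i \<in> ZV d h) \<and>
        ZV d h \<subseteq> span_mod d h (card (generator_verts d h)) g"
      using sandpile_generators_exist[OF assms(1)] by blast
    show "card (generator_verts d h) \<le> k"
      if "\<exists>g. (\<forall>i<k. g i \<in> ZV d h) \<and> ZV d h \<subseteq> span_mod d h k g" for k
      using that assms(1) card_generator_verts_le[of d] by auto
  qed
  also have "\<dots> = (d - 1) ^ h"
    using assms(1) by (intro card_generator_verts) simp
  finally show ?thesis .
qed

end
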